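(* Let $\mathcal{G}$ be an unambiguous weighted context-free grammar with positive weight vector $\omega$, generating $\mathcal{L}$, and let $n\ge0$. Let $P_{n,\omega,k}\in[0,1]$ be the total probability (under the $\omega$-weighted distribution on $\mathcal{L}_n$) of the set of distinct words obtained after $k$ independent draws from that distribution. Then \[ E[P_{n,\omega,k}]=\sum_{i=1}^{|\mathbf{W}_n|} M_{n,i}\,\frac{W_{n,i}}{Z_\omega(n)}\left(1-\left(1-\frac{W_{n,i}}{Z_\omega(n)}\right)^k\right). \] Moreover, if Condition C1 holds, then there exists $\beta>1$ such that for any $k\in o(\beta^n)$, \[ E[P_{n,\omega,k}]=k\,\alpha_{2,n}\left(1+O(\beta^{-n})\right). \]
   Context: A weighted context-free grammar is an unambiguous context-free grammar with terminal alphabet $\Sigma$ and positive weights $\omega=(\omega_t)_{t\in\Sigma}$; $\mathcal{L}_n$ is the set of generated words of length $n$. The weight $\omega(w)$ of a word is the product of its letters' weights (with multiplicity); $Z_\omega(n)=\sum_{w\in\mathcal{L}_n}\omega(w)$, and the $\omega$-weighted distribution gives $w$ probability $\omega(w)/Z_\omega(n)$. $\mathbf{W}_n=(W_{n,1}<W_{n,2}<\dots)$ is the increasingly ordered vector of distinct weights of words in $\mathcal{L}_n$ and $M_{n,i}$ the number of words of weight $W_{n,i}$. $\alpha_{2,n}=\sum_{w\in\mathcal{L}_n}(\omega(w)/Z_\omega(n))^2$. Condition C1: there exists $\beta>1$ such that $\max_{w\in\mathcal{L}_n}\omega(w)/Z_\omega(n)\in O(\beta^{-n})$. *)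

theory Defs
  imports "HOL-Probability.Probability" "HOL-Library.Landau_Symbols"
begin

datatype ('n, 't) ptree = Leaf 't | Node 'n "('n, 't) ptree list"

fun proot :: "('n, 't) ptree \<Rightarrow> 'n + 't" where
  "proot (Leaf t) = Inr t"
| "proot (Node A ts) = Inl A"

fun pyield :: "('n, 't) ptree \<Rightarrow> 't list" where
  "pyield (Leaf t) = [t]"
| "pyield (Node A ts) = concat (map pyield ts)"

inductive valid_tree :: "('n \<times> ('n + 't) list) set \<Rightarrow> ('n, 't) ptree \<Rightarrow> bool"
  for P :: "('n \<times> ('n + 't) list) set" where
  leaf: "valid_tree P (Leaf t)"
| node: "(A, map proot ts) \<in> P \<Longrightarrow> (\<forall>t\<in>set ts. valid_tree P t) \<Longrightarrow> valid_tree P (Node A ts)"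

definition parse_tree :: "('n \<times> ('n + 't) list) set \<Rightarrow> 'n \<Rightarrow> ('n, 't) ptree \<Rightarrow> bool" where
  "parse_tree P S t \<longleftrightarrow> valid_tree P t \<and> proot t = Inl S"

definition cfg_language :: "('n \<times> ('n + 't) list) set \<Rightarrow> 'n \<Rightarrow> 't list set" where
  "cfg_language P S = {pyield t | t. parse_tree P S t}"

definition unambiguous :: "('n \<times> ('n + 't) list) set \<Rightarrow> 'n \<Rightarrow> bool" where
  "unambiguous P S \<longleftrightarrow>
     (\<forall>t1 t2. parse_tree P S t1 \<and> parse_tree P S t2 \<and> pyield t1 = pyield t2 \<longrightarrow> t1 = t2)"

definition word_weight :: "('t \<Rightarrow> real) \<Rightarrow> 't list \<Rightarrow> real" where
  "word_weight \<omega> w = prod_list (map \<omega> w)"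

definition Ln :: "'t list set \<Rightarrow> nat \<Rightarrow> 't list set" where
  "Ln L n = {w \<in> L. length w = n}"

definition Zw :: "'t list set \<Rightarrow> ('t \<Rightarrow> real) \<Rightarrow> nat \<Rightarrow> real" where
  "Zw L \<omega> n = (\<Sum>w\<in>Ln L n. word_weight \<omega> w)"

text \<open>The \<omega>-weighted distribution on L_n (meaningful when L_n is nonempty).\<close>
definition wdist :: "'t list set \<Rightarrow> ('t \<Rightarrow> real) \<Rightarrow> nat \<Rightarrow> 't list pmf" where
  "wdist L \<omega> n = embed_pmf (\<lambda>w. if w \<in> Ln L n then word_weight \<omega> w / Zw L \<omega> n else 0)"

text \<open>Increasingly ordered vector of distinct weights (1-based indexing) and multiplicities.\<close>
definition Wvec :: "'t list set \<Rightarrow> ('t \<Rightarrow> real) \<Rightarrow> nat \<Rightarrow> real list" where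
  "Wvec L \<omega> n = sorted_list_of_set (word_weight \<omega> ` Ln L n)"

definition Wn :: "'t list set \<Rightarrow> ('t \<Rightarrow> real) \<Rightarrow> nat \<Rightarrow> nat \<Rightarrow> real" where
  "Wn L \<omega> n i = Wvec L \<omega> n ! (i - 1)"

definition Mn :: "'t list set \<Rightarrow> ('t \<Rightarrow> real) \<Rightarrow> nat \<Rightarrow> nat \<Rightarrow> nat" where
  "Mn L \<omega> n i = card {w \<in> Ln L n. word_weight \<omega> w = Wn L \<omega> n i}"

definition alpha2 :: "'t list set \<Rightarrow> ('t \<Rightarrow> real) \<Rightarrow> nat \<Rightarrow> real" where
  "alpha2 L \<omega> n = (\<Sum>w\<in>Ln L n. (word_weight \<omega> w / Zw L \<omega> n) ^ 2)"

definition covered_prob :: "'t list set \<Rightarrow> ('t \<Rightarrow> real) \<Rightarrow> nat \<Rightarrow> 't list list \<Rightarrow> real" where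
  "covered_prob L \<omega> n ws = (\<Sum>w\<in>set ws. pmf (wdist L \<omega> n) w)"

definition expected_covered :: "'t list set \<Rightarrow> ('t \<Rightarrow> real) \<Rightarrow> nat \<Rightarrow> nat \<Rightarrow> real" where
  "expected_covered L \<omega> n k =
     measure_pmf.expectation (replicate_pmf k (wdist L \<omega> n)) (covered_prob L \<omega> n)"

text \<open>Asymptotics in n are taken along the lengths n for which L_n is nonempty
  (the only n for which the distribution is defined).\<close>
definition nonempty_lengths :: "'t list set \<Rightarrow> nat filter" where
  "nonempty_lengths L = inf at_top (principal {n. Ln L n \<noteq> {}})"

definition max_prob :: "'t list set \<Rightarrow> ('t \<Rightarrow> real) \<Rightarrow> nat \<Rightarrow> real" where
  "max_prob L \<omega> n = Max ((\<lambda>w. word_weight \<omega> w / Zw L \<omega> n) ` Ln L n)"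

definition condition_C1 :: "'t list set \<Rightarrow> ('t \<Rightarrow> real) \<Rightarrow> bool" where
  "condition_C1 L \<omega> \<longleftrightarrow>
     (\<exists>\<beta>::real. \<beta> > 1 \<and>
        (\<lambda>n. max_prob L \<omega> n) \<in> O[nonempty_lengths L](\<lambda>n. inverse \<beta> ^ n))"

end

theory Submission
  imports Defs
begin

text \<open>Linearity of expectation reduces the expected covered mass of \<open>k\<close> draws to
  \<open>\<Sum>\<^sub>w p\<^sub>w (1 - (1 - p\<^sub>w)\<^sup>k)\<close>; grouping words by weight gives the exact formula.
  Since \<open>0 \<le> k p - (1 - (1 - p)\<^sup>k) \<le> (k p)\<^sup>2\<close>, this sum differs from
  \<open>k \<alpha>\<^sub>2 = \<Sum>\<^sub>w k p\<^sub>w\<^sup>2\<close> by at most \<open>k\<^sup>2 (max\<^sub>w p\<^sub>w) \<alpha>\<^sub>2\<close>. Under C1 with rate \<open>\<beta>\<^sub>0\<close>,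
  take \<open>\<beta> = \<surd>\<beta>\<^sub>0\<close>: for \<open>k \<in> o(\<beta>\<^sup>n)\<close> the relative error \<open>k max\<^sub>w p\<^sub>w\<close> is
  \<open>O(\<beta>\<^sup>n \<beta>\<^sub>0\<^sup>-\<^sup>n) = O(\<beta>\<^sup>-\<^sup>n)\<close>.
  Nothing about the grammar is used beyond the finiteness of the alphabet, which
  makes every \<open>L\<^sub>n\<close> finite.\<close>

lemma measure_replicate_pmf_not_in_set:
  "measure_pmf.prob (replicate_pmf k p) {xs. x \<notin> set xs} = (1 - pmf p x) ^ k"
proof (induction k)
  case 0
  then show ?case by simp
next
  case (Suc k)
  have replicate_Suc: "replicate_pmf (Suc k) p = bind_pmf p (\<lambda>y. map_pmf ((#) y) (replicate_pmf k p))"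
    by (simp add: map_pmf_def)
  have "emeasure (replicate_pmf (Suc k) p) {xs. x \<notin> set xs}
      = (\<integral>\<^sup>+y. ennreal ((1 - pmf p x) ^ k) * indicator (- {x}) y \<partial>p)"
    unfolding replicate_Suc emeasure_bind_pmf emeasure_map_pmf
    by (intro nn_integral_cong)
      (simp add: vimage_def measure_pmf.emeasure_eq_measure Suc.IH split: split_indicator)
  also have "\<dots> = ennreal ((1 - pmf p x) ^ k) * ennreal (1 - pmf p x)"
    using measure_pmf.prob_compl[of "{x}" p]
    by (simp add: nn_integral_cmult_indicator measure_pmf.emeasure_eq_measure
        Compl_eq_Diff_UNIV measure_pmf_single)
  also have "\<dots> = ennreal ((1 - pmf p x) ^ Suc k)"
    by (simp add: ennreal_mult' pmf_le_1 mult.commute)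
  finally show ?case
    by (simp add: measure_pmf.emeasure_eq_measure pmf_le_1)
qed

lemma measure_replicate_pmf_in_set:
  "measure_pmf.prob (replicate_pmf k p) {xs. x \<in> set xs} = 1 - (1 - pmf p x) ^ k"
proof -
  have "{xs. x \<in> set xs} = UNIV - {xs. x \<notin> set xs}" by auto
  then show ?thesis
    using measure_pmf.prob_compl[of "{xs. x \<notin> set xs}" "replicate_pmf k p"]
    by (simp add: measure_replicate_pmf_not_in_set)
qed

lemma expectation_replicate_pmf_covered_mass:
  assumes "finite A" and "set_pmf p \<subseteq> A"
  shows "measure_pmf.expectation (replicate_pmf k p) (\<lambda>xs. \<Sum>x\<in>set xs. pmf p x)
       = (\<Sum>x\<in>A. pmf p x * (1 - (1 - pmf p x) ^ k))"
proof -
  have covered_mass: "(\<Sum>x\<in>set xs. pmf p x) = (\<Sum>x\<in>A. pmf p x * indicator {xs. x \<in> set xs} xs)"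
    for xs
  proof -
    have "(\<Sum>x\<in>set xs. pmf p x) = (\<Sum>x\<in>set xs \<inter> A. pmf p x)"
      by (rule sum.mono_neutral_right) (use assms(2) in \<open>auto simp: set_pmf_iff\<close>)
    also have "\<dots> = (\<Sum>x\<in>A. pmf p x * indicator {xs. x \<in> set xs} xs)"
      using assms(1) by (simp add: sum.inter_restrict indicator_def Int_commute)
    finally show ?thesis .
  qed
  have "measure_pmf.expectation (replicate_pmf k p) (\<lambda>xs. \<Sum>x\<in>set xs. pmf p x)
      = (\<Sum>x\<in>A. measure_pmf.expectation (replicate_pmf k p)
                   (\<lambda>xs. pmf p x * indicator {xs. x \<in> set xs} xs))"
    unfolding covered_mass
    by (rule Bochner_Integration.integral_sum)
      (simp add: measure_pmf.integrable_const_bound[where B = 1])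
  then show ?thesis
    by (simp add: measure_replicate_pmf_in_set)
qed

lemma one_minus_power_linear_error:
  fixes p :: real
  assumes "0 \<le> p" and "p \<le> 1"
  shows "0 \<le> real k * p - (1 - (1 - p) ^ k) \<and> real k * p - (1 - (1 - p) ^ k) \<le> (real k * p)\<^sup>2"
proof (induction k)
  case 0
  then show ?case by simp
next
  case (Suc k)
  have step: "real (Suc k) * p - (1 - (1 - p) ^ Suc k)
      = (real k * p - (1 - (1 - p) ^ k)) + p * (1 - (1 - p) ^ k)"
    by (simp add: algebra_simps)
  have "(1 - p) ^ k \<le> 1"
    using assms by (intro power_le_one) auto
  then have "0 \<le> p * (1 - (1 - p) ^ k)"
    using assms by simp
  moreover have "p * (1 - (1 - p) ^ k) \<le> p * (real k * p)"
    using assms Bernoulli_inequality[of "-p" k] by (intro mult_left_mono) auto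
  moreover have "(real k * p)\<^sup>2 + p * (real k * p) \<le> (real (Suc k) * p)\<^sup>2"
    using assms by (simp add: power2_eq_square algebra_simps)
  ultimately show ?case
    using Suc step by linarith
qed

lemma sum_comp_by_sorted_values:
  fixes f :: "'a \<Rightarrow> 'b::linorder" and g :: "'b \<Rightarrow> 'c::comm_semiring_1"
  assumes "finite A"
  defines "vs \<equiv> sorted_list_of_set (f ` A)"
  shows "(\<Sum>a\<in>A. g (f a))
       = (\<Sum>i = 1..length vs. of_nat (card {a \<in> A. f a = vs ! (i - 1)}) * g (vs ! (i - 1)))"
proof -
  define h where "h v = of_nat (card {a \<in> A. f a = v}) * g v" for v
  have "(\<Sum>a\<in>A. g (f a)) = (\<Sum>v\<in>f ` A. \<Sum>a\<in>{a \<in> A. f a = v}. g (f a))"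
    by (rule sum.image_gen[OF assms(1)])
  also have "\<dots> = (\<Sum>v\<in>f ` A. h v)"
    by (rule sum.cong) (simp_all add: h_def)
  also have "\<dots> = sum_list (map h vs)"
    using assms(1) by (simp add: vs_def sum_list_distinct_conv_sum_set)
  also have "\<dots> = (\<Sum>i<length vs. h (vs ! i))"
    by (simp add: sum_list_sum_nth atLeast0LessThan)
  also have "\<dots> = (\<Sum>i = 1..length vs. h (vs ! (i - 1)))"
    unfolding image_Suc_lessThan[symmetric] by (simp add: sum.reindex)
  finally show ?thesis
    by (simp add: h_def)
qed

lemma word_weight_pos:
  assumes "\<And>t. \<omega> t > (0::real)"
  shows "word_weight \<omega> w > 0"
  unfolding word_weight_def using assms by (induction w) auto

lemma finite_Ln: "finite (Ln (L :: 't::finite list set) n)"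
proof (rule finite_subset)
  show "Ln L n \<subseteq> {xs. set xs \<subseteq> UNIV \<and> length xs = n}"
    by (auto simp: Ln_def)
  show "finite {xs. set xs \<subseteq> (UNIV :: 't set) \<and> length xs = n}"
    by (rule finite_lists_length_eq) simp
qed

lemma Zw_pos:
  fixes L :: "'t::finite list set"
  assumes "Ln L n \<noteq> {}" and "\<And>t. \<omega> t > 0"
  shows "Zw L \<omega> n > 0"
  unfolding Zw_def using assms finite_Ln word_weight_pos[of \<omega>] by (intro sum_pos) auto

lemma word_weight_le_Zw:
  fixes L :: "'t::finite list set"
  assumes "w \<in> Ln L n" and "\<And>t. \<omega> t > 0"
  shows "word_weight \<omega> w \<le> Zw L \<omega> n"
  unfolding Zw_def using assms finite_Ln word_weight_pos[of \<omega>]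
  by (intro member_le_sum) (auto intro: less_imp_le)

lemma pmf_wdist:
  fixes L :: "'t::finite list set"
  assumes "Ln L n \<noteq> {}" and "\<And>t. \<omega> t > 0"
  shows "pmf (wdist L \<omega> n) w = (if w \<in> Ln L n then word_weight \<omega> w / Zw L \<omega> n else 0)"
proof -
  define f where "f = (\<lambda>w. if w \<in> Ln L n then word_weight \<omega> w / Zw L \<omega> n else 0)"
  have nonneg: "f w \<ge> 0" for w
    using Zw_pos[where \<omega> = \<omega>, OF assms] word_weight_pos[of \<omega>, OF assms(2)]
    by (simp add: f_def less_imp_le)
  have "(\<integral>\<^sup>+w. ennreal (f w) \<partial>count_space UNIV) = (\<Sum>w\<in>Ln L n. ennreal (f w))"
    by (rule nn_integral_count_space') (auto simp: f_def finite_Ln)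
  also have "\<dots> = ennreal (\<Sum>w\<in>Ln L n. f w)"
    using nonneg by (simp add: sum_ennreal)
  also have "(\<Sum>w\<in>Ln L n. f w) = (\<Sum>w\<in>Ln L n. word_weight \<omega> w) / Zw L \<omega> n"
    by (simp add: f_def sum_divide_distrib)
  also have "\<dots> = 1"
    using Zw_pos[where \<omega> = \<omega>, OF assms] by (simp add: Zw_def)
  finally have "pmf (embed_pmf f) w = f w"
    using nonneg by (intro pmf_embed_pmf) auto
  then show ?thesis
    by (simp add: wdist_def f_def)
qed

lemma expected_covered_eq_sum_words:
  fixes L :: "'t::finite list set"
  assumes "Ln L n \<noteq> {}" and "\<And>t. \<omega> t > 0"
  shows "expected_covered L \<omega> n k
       = (\<Sum>w\<in>Ln L n. word_weight \<omega> w / Zw L \<omega> n * (1 - (1 - word_weight \<omega> w / Zw L \<omega> n) ^ k))"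
proof -
  have "expected_covered L \<omega> n k
      = (\<Sum>w\<in>Ln L n. pmf (wdist L \<omega> n) w * (1 - (1 - pmf (wdist L \<omega> n) w) ^ k))"
    unfolding expected_covered_def covered_prob_def
    by (rule expectation_replicate_pmf_covered_mass)
      (auto simp: finite_Ln set_pmf_iff pmf_wdist[OF assms] split: if_splits)
  then show ?thesis
    by (simp add: pmf_wdist[OF assms])
qed

lemma expected_covered_eq_sum_weights:
  fixes L :: "'t::finite list set"
  assumes "Ln L n \<noteq> {}" and "\<And>t. \<omega> t > 0"
  shows "expected_covered L \<omega> n k
       = (\<Sum>i = 1..length (Wvec L \<omega> n).
            real (Mn L \<omega> n i) * (Wn L \<omega> n i / Zw L \<omega> n) * (1 - (1 - Wn L \<omega> n i / Zw L \<omega> n) ^ k))"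
  using sum_comp_by_sorted_values[OF finite_Ln, where f = "word_weight \<omega>"
      and g = "\<lambda>v. v / Zw L \<omega> n * (1 - (1 - v / Zw L \<omega> n) ^ k)"]
  by (simp add: expected_covered_eq_sum_words[OF assms] Wvec_def Wn_def Mn_def mult.assoc)

lemma expected_covered_linear_error:
  fixes L :: "'t::finite list set"
  assumes "Ln L n \<noteq> {}" and "\<And>t. \<omega> t > 0"
  shows "\<bar>expected_covered L \<omega> n k - real k * alpha2 L \<omega> n\<bar>
       \<le> (real k)\<^sup>2 * max_prob L \<omega> n * alpha2 L \<omega> n"
proof -
  define p where "p w = word_weight \<omega> w / Zw L \<omega> n" for w
  have "expected_covered L \<omega> n k - real k * alpha2 L \<omega> n
      = (\<Sum>w\<in>Ln L n. p w * ((1 - (1 - p w) ^ k) - real k * p w))"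
    by (simp add: expected_covered_eq_sum_words[OF assms] alpha2_def p_def sum_distrib_left
        sum_subtractf[symmetric] algebra_simps power2_eq_square)
  also have "\<bar>\<dots>\<bar> \<le> (\<Sum>w\<in>Ln L n. (real k)\<^sup>2 * max_prob L \<omega> n * (p w)\<^sup>2)"
  proof (rule order_trans[OF sum_abs sum_mono])
    fix w assume w: "w \<in> Ln L n"
    have p_bounds: "0 \<le> p w" "p w \<le> max_prob L \<omega> n" "p w \<le> 1"
      using Zw_pos[where \<omega> = \<omega>, OF assms] word_weight_pos[of \<omega>, OF assms(2)]
        word_weight_le_Zw[where \<omega> = \<omega>, OF w assms(2)]
      by (auto simp: p_def max_prob_def finite_Ln w less_imp_le intro: Max_ge)
    have "\<bar>(1 - (1 - p w) ^ k) - real k * p w\<bar> \<le> (real k * p w)\<^sup>2"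
      using one_minus_power_linear_error[OF p_bounds(1,3), of k] by linarith
    then have "\<bar>p w * ((1 - (1 - p w) ^ k) - real k * p w)\<bar> \<le> p w * (real k * p w)\<^sup>2"
      using p_bounds by (simp add: abs_mult mult_left_mono)
    also have "\<dots> \<le> max_prob L \<omega> n * (real k * p w)\<^sup>2"
      using p_bounds by (intro mult_right_mono) auto
    finally show "\<bar>p w * ((1 - (1 - p w) ^ k) - real k * p w)\<bar>
        \<le> (real k)\<^sup>2 * max_prob L \<omega> n * (p w)\<^sup>2"
      by (simp add: power_mult_distrib algebra_simps)
  qed
  also have "\<dots> = (real k)\<^sup>2 * max_prob L \<omega> n * alpha2 L \<omega> n"
    by (simp add: alpha2_def p_def sum_distrib_left)
  finally show ?thesis .
qed

lemma bigo_of_quadratic_relative_error: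
  fixes e K a m :: "nat \<Rightarrow> real" and \<beta> :: real
  assumes "\<beta> \<noteq> 0"
    and "eventually (\<lambda>n. \<bar>e n\<bar> \<le> (K n)\<^sup>2 * m n * a n) F"
    and "K \<in> O[F](\<lambda>n. \<beta> ^ n)"
    and "m \<in> O[F](\<lambda>n. inverse (\<beta>\<^sup>2) ^ n)"
  shows "e \<in> O[F](\<lambda>n. K n * a n * inverse \<beta> ^ n)"
proof -
  have "e \<in> O[F](\<lambda>n. K n * a n * (K n * m n))"
  proof (rule bigoI[where c = 1])
    show "eventually (\<lambda>n. norm (e n) \<le> 1 * norm (K n * a n * (K n * m n))) F"
      using assms(2) by eventually_elim
        (use abs_ge_self[of "K n * a n * (K n * m n)" for n] in \<open>auto simp: power2_eq_square algebra_simps\<close>)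
  qed
  also have "(\<lambda>n. K n * a n * (K n * m n)) \<in> O[F](\<lambda>n. K n * a n * (\<beta> ^ n * inverse (\<beta>\<^sup>2) ^ n))"
    using assms(3,4) by (intro landau_o.big.mult_left landau_o.big.mult)
  also have "(\<lambda>n. K n * a n * (\<beta> ^ n * inverse (\<beta>\<^sup>2) ^ n)) = (\<lambda>n. K n * a n * inverse \<beta> ^ n)"
    using assms(1) by (simp add: power_inverse power2_eq_square power_mult_distrib field_simps)
  finally show ?thesis .
qed

lemma expected_covered_asymptotics:
  fixes L :: "'t::finite list set"
  assumes "condition_C1 L \<omega>" and "\<And>t. \<omega> t > 0"
  shows "\<exists>\<beta>::real. \<beta> > 1 \<and>
           (\<forall>k :: nat \<Rightarrow> nat. (\<lambda>n. real (k n)) \<in> o(\<lambda>n. \<beta> ^ n) \<longrightarrow>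
              (\<lambda>n. expected_covered L \<omega> n (k n) - real (k n) * alpha2 L \<omega> n)
                \<in> O[nonempty_lengths L](\<lambda>n. real (k n) * alpha2 L \<omega> n * inverse \<beta> ^ n))"
proof -
  obtain \<beta>\<^sub>0 :: real where "\<beta>\<^sub>0 > 1"
    and max_prob_decay: "max_prob L \<omega> \<in> O[nonempty_lengths L](\<lambda>n. inverse \<beta>\<^sub>0 ^ n)"
    using assms(1) unfolding condition_C1_def by blast
  define \<beta> where "\<beta> = sqrt \<beta>\<^sub>0"
  have "\<beta> > 1" and \<beta>_square: "\<beta>\<^sup>2 = \<beta>\<^sub>0"
    using \<open>\<beta>\<^sub>0 > 1\<close> by (simp_all add: \<beta>_def)
  moreover have "(\<lambda>n. expected_covered L \<omega> n (k n) - real (k n) * alpha2 L \<omega> n)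
             \<in> O[nonempty_lengths L](\<lambda>n. real (k n) * alpha2 L \<omega> n * inverse \<beta> ^ n)"
    if "(\<lambda>n. real (k n)) \<in> o(\<lambda>n. \<beta> ^ n)" for k :: "nat \<Rightarrow> nat"
  proof (rule bigo_of_quadratic_relative_error[where m = "max_prob L \<omega>"])
    show "\<beta> \<noteq> 0" and "max_prob L \<omega> \<in> O[nonempty_lengths L](\<lambda>n. inverse (\<beta>\<^sup>2) ^ n)"
      using \<open>\<beta> > 1\<close> max_prob_decay by (simp_all add: \<beta>_square)
    show "(\<lambda>n. real (k n)) \<in> O[nonempty_lengths L](\<lambda>n. \<beta> ^ n)"
      unfolding nonempty_lengths_def
      by (rule landau_o.big.filter_mono[OF inf_le1 landau_o.small_imp_big[OF that]])
    show "eventually (\<lambda>n. \<bar>expected_covered L \<omega> n (k n) - real (k n) * alpha2 L \<omega> n\<bar>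
        \<le> (real (k n))\<^sup>2 * max_prob L \<omega> n * alpha2 L \<omega> n) (nonempty_lengths L)"
      unfolding nonempty_lengths_def eventually_inf_principal
      using expected_covered_linear_error[where \<omega> = \<omega>, OF _ assms(2)] by simp
  qed
  ultimately show ?thesis
    by blast
qed

theorem theorem4:
  fixes P :: "('n \<times> ('n + 't::finite) list) set" and S :: 'n
    and \<omega> :: "'t \<Rightarrow> real"
  assumes "finite P"
    and "unambiguous P S"
    and "\<And>t. \<omega> t > 0"
  defines "L \<equiv> cfg_language P S"
  shows "(\<forall>n k. Ln L n \<noteq> {} \<longrightarrow>
            expected_covered L \<omega> n k =
              (\<Sum>i = 1..length (Wvec L \<omega> n).
                 real (Mn L \<omega> n i) * (Wn L \<omega> n i / Zw L \<omega> n) *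
                 (1 - (1 - Wn L \<omega> n i / Zw L \<omega> n) ^ k)))
       \<and> (condition_C1 L \<omega> \<longrightarrow>
            (\<exists>\<beta>::real. \<beta> > 1 \<and>
               (\<forall>k :: nat \<Rightarrow> nat. (\<lambda>n. real (k n)) \<in> o(\<lambda>n. \<beta> ^ n) \<longrightarrow>
                  (\<lambda>n. expected_covered L \<omega> n (k n) - real (k n) * alpha2 L \<omega> n)
                    \<in> O[nonempty_lengths L](\<lambda>n. real (k n) * alpha2 L \<omega> n * inverse \<beta> ^ n))))"
  using expected_covered_eq_sum_weights[where \<omega> = \<omega>, OF _ assms(3)]
    expected_covered_asymptotics[where \<omega> = \<omega>, OF _ assms(3)]
  by blast

end
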